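(* Let $S$ be a gcd-category and $a,b\in S$. (1) If $\mathrm{s}(a)=\mathrm{s}(b)$, the following are equivalent: $\varepsilon_S(a),\varepsilon_S(b)$ have a right lcm in $\mathrm{U_{mon}}(S)$; $\varepsilon_S(a),\varepsilon_S(b)$ have a common right multiple in $\mathrm{U_{mon}}(S)$; $a,b$ have a right lcm $a\vee b$ in $S$; $a,b$ have a common right multiple in $S$. When these hold, $\varepsilon_S(a\vee b)$ is the right lcm of $\varepsilon_S(a),\varepsilon_S(b)$. (2) Dually, if $\mathrm{t}(a)=\mathrm{t}(b)$, the following are equivalent: $\varepsilon_S(a),\varepsilon_S(b)$ have a left lcm in $\mathrm{U_{mon}}(S)$; they have a common left multiple there; $a,b$ have a left lcm $a\mathbin{\widetilde\vee} b$ in $S$; $a,b$ have a common left multiple in $S$; and then $\varepsilon_S(a\mathbin{\widetilde\vee} b)$ is the left lcm of $\varepsilon_S(a),\varepsilon_S(b)$.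
   Context: Categories are arrow-only: a set $S$ with partial associative multiplication, identities $\mathrm{Id}\,S$, source/target identities $\mathrm{s}(x),\mathrm{t}(x)$. $\mathrm{U_{mon}}(S)$ is the monoid presented by generators $\varepsilon_S(x)$ ($x\in S$) and relations $\varepsilon_S(e)=1$ ($e\in\mathrm{Id}\,S$), $\varepsilon_S(x)\varepsilon_S(y)=\varepsilon_S(xy)$ whenever $xy$ is defined. In a category or monoid $C$, $a\leqslant_C b$ iff $b=ax$ for some $x$ ($b$ is a right multiple of $a$), and $a\mathbin{\widetilde\leqslant}_C b$ iff $b=xa$ for some $x$ ($b$ a left multiple of $a$). Right lcm = least upper bound for $\leqslant$; left lcm = least upper bound for $\mathbin{\widetilde\leqslant}$; left/right gcd = greatest lower bound for $\leqslant$/$\mathbin{\widetilde\leqslant}$. $S$ is conical if $xy\in\mathrm{Id}\,S$ implies $x\in\mathrm{Id}\,S$. A gcd-category is a conical, left and right cancellative category in which any two elements with the same source have a left gcd and any two elements with the same target have a right gcd. *)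

theory Defs
  imports Main
begin

text \<open>Arrow-only categories: a carrier set S of arrows and a partial
multiplication C, where C x y = Some z means that xy is defined and equals z.\<close>

definition is_ident :: "'a set \<Rightarrow> ('a \<Rightarrow> 'a \<Rightarrow> 'a option) \<Rightarrow> 'a \<Rightarrow> bool" where
  "is_ident S C e \<longleftrightarrow> e \<in> S \<and>
     (\<forall>x\<in>S. (C e x \<noteq> None \<longrightarrow> C e x = Some x) \<and> (C x e \<noteq> None \<longrightarrow> C x e = Some x))"

definition Ids :: "'a set \<Rightarrow> ('a \<Rightarrow> 'a \<Rightarrow> 'a option) \<Rightarrow> 'a set" where
  "Ids S C = {e. is_ident S C e}"

definition category :: "'a set \<Rightarrow> ('a \<Rightarrow> 'a \<Rightarrow> 'a option) \<Rightarrow> bool" where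
  "category S C \<longleftrightarrow>
     (\<forall>x y z. C x y = Some z \<longrightarrow> x \<in> S \<and> y \<in> S \<and> z \<in> S) \<and>
     (\<forall>x\<in>S. \<forall>y\<in>S. \<forall>z\<in>S.
        Option.bind (C x y) (\<lambda>u. C u z) = Option.bind (C y z) (\<lambda>v. C x v)) \<and>
     (\<forall>x\<in>S. \<forall>y\<in>S. \<forall>z\<in>S. C x y \<noteq> None \<longrightarrow> C y z \<noteq> None \<longrightarrow>
        Option.bind (C x y) (\<lambda>u. C u z) \<noteq> None) \<and>
     (\<forall>x\<in>S. (\<exists>e. is_ident S C e \<and> C e x \<noteq> None) \<and> (\<exists>e. is_ident S C e \<and> C x e \<noteq> None))"

definition src :: "'a set \<Rightarrow> ('a \<Rightarrow> 'a \<Rightarrow> 'a option) \<Rightarrow> 'a \<Rightarrow> 'a" where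
  "src S C x = (THE e. is_ident S C e \<and> C e x \<noteq> None)"

definition tgt :: "'a set \<Rightarrow> ('a \<Rightarrow> 'a \<Rightarrow> 'a option) \<Rightarrow> 'a \<Rightarrow> 'a" where
  "tgt S C x = (THE e. is_ident S C e \<and> C x e \<noteq> None)"

definition cleq :: "'a set \<Rightarrow> ('a \<Rightarrow> 'a \<Rightarrow> 'a option) \<Rightarrow> 'a \<Rightarrow> 'a \<Rightarrow> bool" where
  "cleq S C a b \<longleftrightarrow> (\<exists>x\<in>S. C a x = Some b)"

definition cleqL :: "'a set \<Rightarrow> ('a \<Rightarrow> 'a \<Rightarrow> 'a option) \<Rightarrow> 'a \<Rightarrow> 'a \<Rightarrow> bool" where
  "cleqL S C a b \<longleftrightarrow> (\<exists>x\<in>S. C x a = Some b)"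

definition is_lub :: "'b set \<Rightarrow> ('b \<Rightarrow> 'b \<Rightarrow> bool) \<Rightarrow> 'b \<Rightarrow> 'b \<Rightarrow> 'b \<Rightarrow> bool" where
  "is_lub A R a b m \<longleftrightarrow> m \<in> A \<and> R a m \<and> R b m \<and> (\<forall>w\<in>A. R a w \<longrightarrow> R b w \<longrightarrow> R m w)"

definition is_glb :: "'b set \<Rightarrow> ('b \<Rightarrow> 'b \<Rightarrow> bool) \<Rightarrow> 'b \<Rightarrow> 'b \<Rightarrow> 'b \<Rightarrow> bool" where
  "is_glb A R a b d \<longleftrightarrow> d \<in> A \<and> R d a \<and> R d b \<and> (\<forall>c\<in>A. R c a \<longrightarrow> R c b \<longrightarrow> R c d)"

definition gcd_category :: "'a set \<Rightarrow> ('a \<Rightarrow> 'a \<Rightarrow> 'a option) \<Rightarrow> bool" where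
  "gcd_category S C \<longleftrightarrow> category S C \<and>
     (\<forall>x y. C x y \<noteq> None \<longrightarrow> C x y \<in> Some ` Ids S C \<longrightarrow> x \<in> Ids S C) \<and>
     (\<forall>x y z. C x y \<noteq> None \<longrightarrow> C x y = C x z \<longrightarrow> y = z) \<and>
     (\<forall>x y z. C y x \<noteq> None \<longrightarrow> C y x = C z x \<longrightarrow> y = z) \<and>
     (\<forall>a\<in>S. \<forall>b\<in>S. src S C a = src S C b \<longrightarrow> (\<exists>d. is_glb S (cleq S C) a b d)) \<and>
     (\<forall>a\<in>S. \<forall>b\<in>S. tgt S C a = tgt S C b \<longrightarrow> (\<exists>d. is_glb S (cleqL S C) a b d))"

text \<open>The monoid U_mon(S): words over S modulo the congruence generated by
  [e] ~ [] (e an identity) and [x,y] ~ [xy] (xy defined).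
  The word [x] represents eps_S(x); concatenation is the product.\<close>

inductive ueq :: "'a set \<Rightarrow> ('a \<Rightarrow> 'a \<Rightarrow> 'a option) \<Rightarrow> 'a list \<Rightarrow> 'a list \<Rightarrow> bool"
  for S C where
  ueq_refl: "ueq S C u u"
| ueq_sym: "ueq S C u v \<Longrightarrow> ueq S C v u"
| ueq_trans: "ueq S C u v \<Longrightarrow> ueq S C v w \<Longrightarrow> ueq S C u w"
| ueq_ctxt: "ueq S C u v \<Longrightarrow> ueq S C (p @ u @ q) (p @ v @ q)"
| ueq_id: "e \<in> Ids S C \<Longrightarrow> ueq S C [e] []"
| ueq_mult: "C x y = Some z \<Longrightarrow> ueq S C [x, y] [z]"

definition uleq :: "'a set \<Rightarrow> ('a \<Rightarrow> 'a \<Rightarrow> 'a option) \<Rightarrow> 'a list \<Rightarrow> 'a list \<Rightarrow> bool" where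
  "uleq S C u v \<longleftrightarrow> (\<exists>x\<in>lists S. ueq S C (u @ x) v)"

definition uleqL :: "'a set \<Rightarrow> ('a \<Rightarrow> 'a \<Rightarrow> 'a option) \<Rightarrow> 'a list \<Rightarrow> 'a list \<Rightarrow> bool" where
  "uleqL S C u v \<longleftrightarrow> (\<exists>x\<in>lists S. ueq S C (x @ u) v)"

end

theory Submission imports Defs begin

text \<open>If \<open>a a' = b b' = w\<close>, let \<open>c\<close> be the right gcd of \<open>a'\<close> and \<open>b'\<close> and write
  \<open>a' = x c\<close>, \<open>b' = y c\<close>; then \<open>m = a x = b y\<close> and the cofactors \<open>x\<close>, \<open>y\<close> have no
  common right divisor other than identities. For a common right multiple \<open>w'\<close> of \<open>a\<close> and
  \<open>b\<close>, the left gcd \<open>d\<close> of \<open>m\<close> and \<open>w'\<close> is again a common right multiple of \<open>a\<close> and \<open>b\<close>;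
  writing \<open>m = d r\<close>, cancellation makes \<open>r\<close> a common right divisor of \<open>x\<close> and \<open>y\<close>, so
  \<open>m = d\<close> divides \<open>w'\<close> and \<open>m\<close> is the right lcm.

  To compare with \<open>U_mon(S)\<close>, reduce words from left to right, dropping identities and
  multiplying each letter into the preceding one whenever the product is defined. By
  conicality the result is invariant under the congruence presenting \<open>U_mon(S)\<close>, and for a
  word starting with a non-identity \<open>a\<close> its first letter is a right multiple of \<open>a\<close> in \<open>S\<close>.
  So every common right multiple of \<open>\<epsilon>(a)\<close> and \<open>\<epsilon>(b)\<close> is a right multiple of \<open>\<epsilon>(h)\<close> for
  a common right multiple \<open>h\<close> of \<open>a\<close> and \<open>b\<close> in \<open>S\<close>. The left-handed statements are the
  right-handed ones for the opposite category, with words reversed.\<close>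

locale arrow_category =
  fixes S :: "'a set" and C :: "'a \<Rightarrow> 'a \<Rightarrow> 'a option"
  assumes category: "category S C"
begin

lemma mult_closed: "C x y = Some z \<Longrightarrow> x \<in> S \<and> y \<in> S \<and> z \<in> S"
  using category unfolding category_def by blast

lemma mult_assoc_lr:
  assumes "C x y = Some u" "C u z = Some w"
  shows "\<exists>v. C y z = Some v \<and> C x v = Some w"
proof -
  have "x \<in> S" "y \<in> S" "z \<in> S" using mult_closed assms by blast+
  with category assms have "Option.bind (C y z) (\<lambda>v. C x v) = Some w"
    unfolding category_def by (metis bind.simps(2))
  then show ?thesis by (cases "C y z") auto
qed

lemma mult_assoc_rl:
  assumes "C y z = Some v" "C x v = Some w"
  shows "\<exists>u. C x y = Some u \<and> C u z = Some w"
proof -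
  have "x \<in> S" "y \<in> S" "z \<in> S" using mult_closed assms by blast+
  with category assms have "Option.bind (C x y) (\<lambda>u. C u z) = Some w"
    unfolding category_def by (metis bind.simps(2))
  then show ?thesis by (cases "C x y") auto
qed

lemma mult_composable:
  assumes "C x y = Some u" "C y z = Some v"
  shows "\<exists>w. C u z = Some w \<and> C x v = Some w"
proof -
  have "x \<in> S" "y \<in> S" "z \<in> S" using mult_closed assms by blast+
  with category assms have "C u z \<noteq> None"
    unfolding category_def by (metis bind.simps(2) option.distinct(1))
  then obtain w where w: "C u z = Some w" by auto
  with mult_assoc_lr[OF assms(1) w] assms show ?thesis by auto
qed

lemma Ids_in_carrier: "e \<in> Ids S C \<Longrightarrow> e \<in> S"
  unfolding Ids_def is_ident_def by auto

lemma ident_mult_left: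
  assumes "e \<in> Ids S C" "C e x = Some y" shows "y = x"
proof -
  have "x \<in> S" using mult_closed assms(2) by blast
  with assms show ?thesis unfolding Ids_def is_ident_def by auto
qed

lemma ident_mult_right:
  assumes "e \<in> Ids S C" "C x e = Some y" shows "y = x"
proof -
  have "x \<in> S" using mult_closed assms(2) by blast
  with assms show ?thesis unfolding Ids_def is_ident_def by auto
qed

lemma ex_left_ident:
  assumes "x \<in> S" shows "\<exists>e\<in>Ids S C. C e x = Some x"
proof -
  obtain e y where "e \<in> Ids S C" "C e x = Some y"
    using category assms unfolding category_def Ids_def by blast
  with ident_mult_left show ?thesis by blast
qed

lemma ex_right_ident:
  assumes "x \<in> S" shows "\<exists>e\<in>Ids S C. C x e = Some x"
proof -
  obtain e y where "e \<in> Ids S C" "C x e = Some y"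
    using category assms unfolding category_def Ids_def by blast
  with ident_mult_right show ?thesis by blast
qed

lemma left_ident_unique:
  assumes "e \<in> Ids S C" "e' \<in> Ids S C" "C e x = Some x" "C e' x = Some x"
  shows "e = e'"
proof -
  from mult_assoc_rl[OF assms(3,4)] obtain u where u: "C e' e = Some u" by auto
  show ?thesis using ident_mult_left[OF assms(2) u] ident_mult_right[OF assms(1) u] by simp
qed

lemma right_ident_unique:
  assumes "e \<in> Ids S C" "e' \<in> Ids S C" "C x e = Some x" "C x e' = Some x"
  shows "e = e'"
proof -
  from mult_assoc_lr[OF assms(3,4)] obtain v where v: "C e e' = Some v" by auto
  show ?thesis using ident_mult_left[OF assms(1) v] ident_mult_right[OF assms(2) v] by simp
qed

lemma src_eqI:
  assumes "e \<in> Ids S C" "C e x = Some x" shows "src S C x = e"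
  unfolding src_def
proof (rule the_equality)
  show "is_ident S C e \<and> C e x \<noteq> None" using assms by (simp add: Ids_def)
next
  fix e' assume "is_ident S C e' \<and> C e' x \<noteq> None"
  then have "e' \<in> Ids S C" "C e' x = Some x" using ident_mult_left by (auto simp: Ids_def)
  then show "e' = e" using left_ident_unique assms by blast
qed

lemma tgt_eqI:
  assumes "e \<in> Ids S C" "C x e = Some x" shows "tgt S C x = e"
  unfolding tgt_def
proof (rule the_equality)
  show "is_ident S C e \<and> C x e \<noteq> None" using assms by (simp add: Ids_def)
next
  fix e' assume "is_ident S C e' \<and> C x e' \<noteq> None"
  then have "e' \<in> Ids S C" "C x e' = Some x" using ident_mult_right by (auto simp: Ids_def)
  then show "e' = e" using right_ident_unique assms by blast
qed

lemma src_ident: "x \<in> S \<Longrightarrow> src S C x \<in> Ids S C \<and> C (src S C x) x = Some x"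
  using ex_left_ident src_eqI by blast

lemma tgt_ident: "x \<in> S \<Longrightarrow> tgt S C x \<in> Ids S C \<and> C x (tgt S C x) = Some x"
  using ex_right_ident tgt_eqI by blast

lemma src_of_ident:
  assumes "e \<in> Ids S C" shows "src S C e = e"
proof -
  obtain e' where "e' \<in> Ids S C" "C e' e = Some e"
    using ex_left_ident Ids_in_carrier assms by blast
  with assms ident_mult_right have "C e e = Some e" by metis
  with assms show ?thesis by (rule src_eqI)
qed

lemma src_mult:
  assumes "C x y = Some z" shows "src S C z = src S C x"
proof -
  have e: "src S C x \<in> Ids S C" "C (src S C x) x = Some x"
    using src_ident mult_closed assms by blast+
  from mult_composable[OF e(2) assms] have "C (src S C x) z = Some z"
    using ident_mult_left e(1) by fastforce
  with e(1) show ?thesis by (rule src_eqI)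
qed

lemma tgt_mult:
  assumes "C x y = Some z" shows "tgt S C z = tgt S C y"
proof -
  have e: "tgt S C y \<in> Ids S C" "C y (tgt S C y) = Some y"
    using tgt_ident mult_closed assms by blast+
  from mult_composable[OF assms e(2)] have "C z (tgt S C y) = Some z"
    using ident_mult_right e(1) by fastforce
  with e(1) show ?thesis by (rule tgt_eqI)
qed

lemma cleq_refl: "a \<in> S \<Longrightarrow> cleq S C a a"
  using tgt_ident Ids_in_carrier unfolding cleq_def by blast

lemma cleq_trans:
  assumes "cleq S C a b" "cleq S C b c" shows "cleq S C a c"
proof -
  obtain x y where "C a x = Some b" "C b y = Some c"
    using assms unfolding cleq_def by blast
  from mult_assoc_lr[OF this] obtain v where "C x y = Some v" "C a v = Some c" by blast
  then show ?thesis unfolding cleq_def using mult_closed by blast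
qed

end

locale conical_category = arrow_category +
  assumes conical: "C x y = Some e \<Longrightarrow> e \<in> Ids S C \<Longrightarrow> x \<in> Ids S C"
begin

definition push :: "'a \<Rightarrow> 'a list \<Rightarrow> 'a list" where
  "push x s = (if x \<in> Ids S C then s
     else if s \<noteq> [] \<and> C (last s) x \<noteq> None then butlast s @ [the (C (last s) x)]
     else s @ [x])"

definition push_all :: "'a list \<Rightarrow> 'a list \<Rightarrow> 'a list" where
  "push_all s u = foldl (\<lambda>s x. push x s) s u"

definition reduce :: "'a list \<Rightarrow> 'a list" where
  "reduce u = push_all [] u"

lemma push_all_simps [simp]:
  "push_all s [] = s"
  "push_all s (x # u) = push_all (push x s) u"
  "push_all s (u @ v) = push_all (push_all s u) v"
  by (simp_all add: push_all_def)

lemma push_ident: "x \<in> Ids S C \<Longrightarrow> push x s = s"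
  unfolding push_def by simp

lemma push_mult:
  "x \<notin> Ids S C \<Longrightarrow> s \<noteq> [] \<Longrightarrow> C (last s) x = Some z \<Longrightarrow> push x s = butlast s @ [z]"
  unfolding push_def by simp

lemma push_snoc:
  "x \<notin> Ids S C \<Longrightarrow> s = [] \<or> C (last s) x = None \<Longrightarrow> push x s = s @ [x]"
  unfolding push_def by auto

lemma push_push:
  assumes yx: "C y x = Some z" shows "push x (push y r) = push z r"
proof (cases "x \<in> Ids S C")
  case True
  then show ?thesis using ident_mult_right yx by (metis push_ident)
next
  case xn: False
  show ?thesis
  proof (cases "y \<in> Ids S C")
    case True
    then show ?thesis using ident_mult_left yx by (metis push_ident)
  next
    case yn: False
    have zn: "z \<notin> Ids S C" using conical yx yn by blast
    show ?thesis
    proof (cases "r \<noteq> [] \<and> C (last r) y \<noteq> None")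
      case True
      then obtain q where q: "C (last r) y = Some q" and rn: "r \<noteq> []" by auto
      from mult_composable[OF q yx] obtain t where t: "C q x = Some t" "C (last r) z = Some t"
        by blast
      have "push x (push y r) = butlast r @ [t]"
        using push_mult[OF yn rn q] push_mult[OF xn, of "butlast r @ [q]" t] t by simp
      also have "\<dots> = push z r" using push_mult[OF zn rn t(2)] by simp
      finally show ?thesis .
    next
      case False
      have "C (last r) z = None" if "r \<noteq> []"
        using mult_assoc_rl[OF yx] False that by fastforce
      then have "push z r = r @ [z]" using push_snoc[OF zn] by blast
      moreover have "push y r = r @ [y]" using push_snoc[OF yn] False by auto
      ultimately show ?thesis using push_mult[OF xn, of "r @ [y]" z] yx by simp
    qed
  qed
qed

lemma push_all_push: "push_all s (push x t) = push x (push_all s t)"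
proof -
  consider "x \<in> Ids S C" | "x \<notin> Ids S C" "t \<noteq> []" "C (last t) x \<noteq> None"
    | "x \<notin> Ids S C" "t = [] \<or> C (last t) x = None"
    by blast
  then show ?thesis
  proof cases
    case 1 then show ?thesis by (simp add: push_ident)
  next
    case 2
    then obtain z t' y where z: "C y x = Some z" and t: "t = t' @ [y]"
      by (metis append_butlast_last_id not_None_eq)
    then have "push x t = t' @ [z]" using push_mult[OF 2(1,2)] by simp
    then show ?thesis using push_push[OF z] t by (simp add: push_all_def)
  next
    case 3 then show ?thesis using push_snoc by (simp add: push_all_def)
  qed
qed

lemma push_all_reduce: "push_all s (reduce u) = push_all s u"
  by (induction u rule: rev_induct) (simp_all add: reduce_def push_all_push)

lemma reduce_append: "reduce (u @ v) = push_all (reduce u) v"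
  by (simp add: reduce_def)

lemma reduce_eq_if_ueq: "ueq S C u v \<Longrightarrow> reduce u = reduce v"
proof (induction rule: ueq.induct)
  case (ueq_ctxt u v p q)
  then show ?case by (metis push_all_reduce reduce_append)
next
  case (ueq_id e) then show ?case by (simp add: reduce_def push_ident)
next
  case (ueq_mult x y z) then show ?case by (simp add: reduce_def push_push)
qed auto

lemma ueq_snoc_push: "ueq S C (r @ [x]) (push x r)"
proof -
  consider "x \<in> Ids S C" | z where "x \<notin> Ids S C" "r \<noteq> []" "C (last r) x = Some z"
    | "x \<notin> Ids S C" "r = [] \<or> C (last r) x = None"
    by fastforce
  then show ?thesis
  proof cases
    case 1
    then show ?thesis using ueq_ctxt[OF ueq_id[OF 1], of r "[]"] by (simp add: push_ident)
  next
    case (2 z)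
    have "ueq S C (butlast r @ [last r, x] @ []) (butlast r @ [z] @ [])"
      by (rule ueq_ctxt[OF ueq_mult[where S=S and C=C, OF 2(3)]])
    then show ?thesis using push_mult[OF 2] \<open>r \<noteq> []\<close>
      by (metis append.assoc append_Cons append_Nil append_Nil2 append_butlast_last_id)
  next
    case 3
    then show ?thesis using push_snoc by (simp add: ueq_refl)
  qed
qed

lemma ueq_reduce: "ueq S C u (reduce u)"
proof (induction u rule: rev_induct)
  case Nil then show ?case by (simp add: reduce_def ueq_refl)
next
  case (snoc x u)
  have "ueq S C ([] @ u @ [x]) ([] @ reduce u @ [x])" by (rule ueq_ctxt[OF snoc.IH])
  moreover have "ueq S C (reduce u @ [x]) (reduce (u @ [x]))"
    using ueq_snoc_push by (simp add: reduce_append)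
  ultimately show ?case by (auto intro: ueq_trans)
qed

lemma push_in_lists: "s \<in> lists S \<Longrightarrow> x \<in> S \<Longrightarrow> push x s \<in> lists S"
  unfolding push_def using mult_closed by (auto dest: in_set_butlastD)

lemma push_all_in_lists: "s \<in> lists S \<Longrightarrow> u \<in> lists S \<Longrightarrow> push_all s u \<in> lists S"
  by (induction u arbitrary: s) (auto simp: push_in_lists)

lemma cleq_hd_push:
  assumes "s \<noteq> []" "hd s \<in> S"
  shows "push x s \<noteq> [] \<and> hd (push x s) \<in> S \<and> cleq S C (hd s) (hd (push x s))"
proof -
  consider "x \<in> Ids S C" | z where "x \<notin> Ids S C" "C (last s) x = Some z"
    | "x \<notin> Ids S C" "C (last s) x = None"
    by fastforce
  then show ?thesis
  proof cases
    case 1 then show ?thesis using assms cleq_refl by (simp add: push_ident)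
  next
    case (2 z)
    have p: "push x s = butlast s @ [z]" using push_mult[OF 2(1) assms(1) 2(2)] .
    show ?thesis
    proof (cases "butlast s = []")
      case True
      then have "last s = hd s" using assms(1)
        by (metis append_butlast_last_id append_Nil list.sel(1))
      then have "cleq S C (hd s) z" using 2(2) mult_closed unfolding cleq_def by auto
      with p True mult_closed[OF 2(2)] show ?thesis by simp
    next
      case False
      then have "hd (butlast s @ [z]) = hd s"
        by (metis append_butlast_last_id assms(1) hd_append2)
      then show ?thesis using p assms cleq_refl by simp
    qed
  next
    case 3 then show ?thesis using push_snoc assms cleq_refl by simp
  qed
qed

lemma cleq_hd_push_all:
  "s \<noteq> [] \<Longrightarrow> hd s \<in> S \<Longrightarrow> \<exists>h t. push_all s u = h # t \<and> cleq S C (hd s) h"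
proof (induction u arbitrary: s)
  case Nil then show ?case using cleq_refl by (cases s) auto
next
  case (Cons x u)
  note step = cleq_hd_push[OF Cons.prems, of x]
  with Cons.IH[of "push x s"] show ?case using cleq_trans by auto
qed

lemma cleq_hd_reduce:
  assumes "a \<in> S" "a \<notin> Ids S C" "uleq S C [a] w"
  shows "reduce w \<noteq> [] \<and> cleq S C a (hd (reduce w))"
proof -
  obtain x where "ueq S C ([a] @ x) w" using assms(3) unfolding uleq_def by blast
  then have "reduce w = reduce (a # x)" using reduce_eq_if_ueq by simp
  also have "\<dots> = push_all [a] x" using push_snoc[OF assms(2), of "[]"] by (simp add: reduce_def)
  finally have "reduce w = push_all [a] x" .
  with cleq_hd_push_all[of "[a]" x] assms(1) show ?thesis by auto
qed

lemma uleq_hd_reduce: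
  assumes "w \<in> lists S" "reduce w \<noteq> []"
  shows "uleq S C [hd (reduce w)] w"
proof -
  obtain h t where ht: "reduce w = h # t" using assms(2) by (meson list.exhaust)
  have "reduce w \<in> lists S" using push_all_in_lists assms(1) by (simp add: reduce_def)
  moreover have "ueq S C ([h] @ t) w" using ueq_sym[OF ueq_reduce, of w] ht by simp
  ultimately show ?thesis using ht unfolding uleq_def by auto
qed

lemma cleq_common_multiple_of_uleq:
  assumes "a \<in> S" "b \<in> S" "src S C a = src S C b"
    and "w \<in> lists S" "uleq S C [a] w" "uleq S C [b] w"
  shows "\<exists>h\<in>S. cleq S C a h \<and> cleq S C b h \<and> uleq S C [h] w"
proof -
  consider "a \<in> Ids S C" | "b \<in> Ids S C" | "a \<notin> Ids S C" "b \<notin> Ids S C" by blast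
  then show ?thesis
  proof cases
    case 1
    then have "C a b = Some b" using src_of_ident src_ident assms(2,3) by metis
    then have "cleq S C a b" using assms(2) unfolding cleq_def by blast
    then show ?thesis using assms cleq_refl by blast
  next
    case 2
    then have "C b a = Some a" using src_of_ident src_ident assms(1,3) by metis
    then have "cleq S C b a" using assms(1) unfolding cleq_def by blast
    then show ?thesis using assms cleq_refl by blast
  next
    case 3
    with assms cleq_hd_reduce have "reduce w \<noteq> []"
      "cleq S C a (hd (reduce w))" "cleq S C b (hd (reduce w))" by blast+
    moreover have "hd (reduce w) \<in> S" using calculation(2) mult_closed unfolding cleq_def by blast
    ultimately show ?thesis using uleq_hd_reduce assms(4) by blast
  qed
qed

lemma uleq_of_cleq: "cleq S C u m \<Longrightarrow> uleq S C [u] [m]"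
  unfolding cleq_def uleq_def using ueq_mult[where S=S and C=C] by force

lemma uleq_trans_cleq:
  assumes "cleq S C m h" "uleq S C [h] w" shows "uleq S C [m] w"
proof -
  obtain c where c: "c \<in> S" "C m c = Some h" using assms unfolding cleq_def by blast
  obtain x where x: "x \<in> lists S" "ueq S C ([h] @ x) w" using assms unfolding uleq_def by blast
  have "ueq S C ([] @ [m, c] @ x) ([] @ [h] @ x)"
    by (rule ueq_ctxt[OF ueq_mult[where S=S and C=C, OF c(2)]])
  then have "ueq S C ([m] @ (c # x)) w" using x(2) ueq_trans by simp
  then show ?thesis using c x unfolding uleq_def by (intro bexI[of _ "c # x"]) auto
qed

lemma is_lub_uleq_of_is_lub_cleq:
  assumes "a \<in> S" "b \<in> S" "src S C a = src S C b" and lcm: "is_lub S (cleq S C) a b m"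
  shows "is_lub (lists S) (uleq S C) [a] [b] [m]"
proof -
  have "uleq S C [m] w" if "w \<in> lists S" "uleq S C [a] w" "uleq S C [b] w" for w
    using cleq_common_multiple_of_uleq[OF assms(1-3) that] lcm uleq_trans_cleq
    unfolding is_lub_def by blast
  with lcm show ?thesis unfolding is_lub_def by (auto intro: uleq_of_cleq)
qed

end

locale gcd_cat =
  fixes S :: "'a set" and C :: "'a \<Rightarrow> 'a \<Rightarrow> 'a option"
  assumes gcd_category: "gcd_category S C"

sublocale gcd_cat \<subseteq> conical_category
  using gcd_category by unfold_locales (auto simp: gcd_category_def)

context gcd_cat
begin

lemma cancel_left: "C x y = Some z \<Longrightarrow> C x y' = Some z \<Longrightarrow> y = y'"
  using gcd_category unfolding gcd_category_def by (metis option.distinct(1))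

lemma cancel_right: "C y x = Some z \<Longrightarrow> C y' x = Some z \<Longrightarrow> y = y'"
  using gcd_category unfolding gcd_category_def by (metis option.distinct(1))

lemma left_gcd_exists:
  "a \<in> S \<Longrightarrow> b \<in> S \<Longrightarrow> src S C a = src S C b \<Longrightarrow> \<exists>d. is_glb S (cleq S C) a b d"
  using gcd_category unfolding gcd_category_def by blast

lemma right_gcd_exists:
  "a \<in> S \<Longrightarrow> b \<in> S \<Longrightarrow> tgt S C a = tgt S C b \<Longrightarrow> \<exists>d. is_glb S (cleqL S C) a b d"
  using gcd_category unfolding gcd_category_def by blast

definition right_coprime :: "'a \<Rightarrow> 'a \<Rightarrow> bool" where
  "right_coprime x y \<longleftrightarrow> (\<forall>p q r. C p r = Some x \<longrightarrow> C q r = Some y \<longrightarrow> r \<in> Ids S C)"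

lemma right_coprime_cofactors:
  assumes gcd: "is_glb S (cleqL S C) x' y' c" and x: "C x c = Some x'" and y: "C y c = Some y'"
  shows "right_coprime x y"
  unfolding right_coprime_def
proof (intro allI impI)
  fix p q r assume p: "C p r = Some x" and q: "C q r = Some y"
  from mult_assoc_lr[OF p x] obtain rc where rc: "C r c = Some rc" "C p rc = Some x'" by blast
  from mult_assoc_lr[OF q y] rc(1) have "C q rc = Some y'" by auto
  with rc gcd have "cleqL S C rc c"
    using mult_closed unfolding is_glb_def cleqL_def by blast
  then obtain z where z: "C z rc = Some c" unfolding cleqL_def by blast
  from mult_assoc_rl[OF rc(1) z] obtain u where u: "C z r = Some u" "C u c = Some c" by blast
  have c: "src S C c \<in> Ids S C" "C (src S C c) c = Some c"
    using src_ident mult_closed z by blast+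
  with cancel_right[OF u(2)] have "u \<in> Ids S C" by metis
  moreover from conical[OF u(1) this] have "z \<in> Ids S C" .
  ultimately show "r \<in> Ids S C" using ident_mult_left u(1) by metis
qed

lemma common_multiple_with_right_coprime_cofactors:
  assumes "C a a' = Some w" "C b b' = Some w"
  obtains x y m where "C a x = Some m" "C b y = Some m" "right_coprime x y"
proof -
  have "tgt S C a' = tgt S C b'" using tgt_mult assms by metis
  then obtain c where gcd: "is_glb S (cleqL S C) a' b' c"
    using right_gcd_exists mult_closed assms by blast
  then obtain x y where x: "C x c = Some a'" and y: "C y c = Some b'"
    unfolding is_glb_def cleqL_def by blast
  from mult_assoc_rl[OF x assms(1)] obtain m where m: "C a x = Some m" "C m c = Some w" by blast
  from mult_assoc_rl[OF y assms(2)] obtain m' where m': "C b y = Some m'" "C m' c = Some w" by blast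
  have "m' = m" using cancel_right[OF m'(2) m(2)] .
  with m m' right_coprime_cofactors[OF gcd x y] show ?thesis using that by blast
qed

lemma is_lub_of_right_coprime_cofactors:
  assumes a: "C a x = Some m" and b: "C b y = Some m" and coprime: "right_coprime x y"
  shows "is_lub S (cleq S C) a b m"
proof -
  have am: "cleq S C a m" and bm: "cleq S C b m"
    using a b mult_closed unfolding cleq_def by blast+
  have "cleq S C m w" if w: "w \<in> S" "cleq S C a w" "cleq S C b w" for w
  proof -
    have "src S C w = src S C m"
      using w(2) a src_mult unfolding cleq_def by metis
    then obtain d where d: "is_glb S (cleq S C) m w d"
      using left_gcd_exists w(1) mult_closed a by metis
    then have "cleq S C a d" "cleq S C b d"
      using am bm w mult_closed a b unfolding is_glb_def by blast+
    then obtain p q where p: "C a p = Some d" and q: "C b q = Some d"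
      unfolding cleq_def by blast
    obtain r where r: "C d r = Some m" using d unfolding is_glb_def cleq_def by blast
    from mult_assoc_lr[OF p r] cancel_left a have "C p r = Some x" by metis
    moreover from mult_assoc_lr[OF q r] cancel_left b have "C q r = Some y" by metis
    ultimately have "r \<in> Ids S C" using coprime unfolding right_coprime_def by blast
    then have "d = m" using ident_mult_right r by blast
    with d show ?thesis unfolding is_glb_def by blast
  qed
  with am bm show ?thesis using mult_closed a unfolding is_lub_def by blast
qed

lemma right_lcm_exists:
  assumes "cleq S C a w" "cleq S C b w"
  shows "\<exists>m. is_lub S (cleq S C) a b m"
proof -
  obtain a' b' where "C a a' = Some w" "C b b' = Some w"
    using assms unfolding cleq_def by blast
  then show ?thesis
    using common_multiple_with_right_coprime_cofactors is_lub_of_right_coprime_cofactors by metis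
qed

lemma right_lcm_equivalences:
  assumes "a \<in> S" "b \<in> S" "src S C a = src S C b"
  shows
      "((\<exists>m. is_lub (lists S) (uleq S C) [a] [b] m)
         \<longleftrightarrow> (\<exists>w\<in>lists S. uleq S C [a] w \<and> uleq S C [b] w)) \<and>
      ((\<exists>w\<in>lists S. uleq S C [a] w \<and> uleq S C [b] w)
         \<longleftrightarrow> (\<exists>m. is_lub S (cleq S C) a b m)) \<and>
      ((\<exists>m. is_lub S (cleq S C) a b m)
         \<longleftrightarrow> (\<exists>w\<in>S. cleq S C a w \<and> cleq S C b w)) \<and>
      (\<forall>m. is_lub S (cleq S C) a b m \<longrightarrow> is_lub (lists S) (uleq S C) [a] [b] [m])"
proof -
  have "\<exists>w\<in>S. cleq S C a w \<and> cleq S C b w"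
    if "\<exists>w\<in>lists S. uleq S C [a] w \<and> uleq S C [b] w"
    using that cleq_common_multiple_of_uleq[OF assms] by blast
  moreover have "\<exists>m. is_lub S (cleq S C) a b m" if "\<exists>w\<in>S. cleq S C a w \<and> cleq S C b w"
    using that right_lcm_exists by blast
  moreover have "\<exists>w\<in>S. cleq S C a w \<and> cleq S C b w" if "is_lub S (cleq S C) a b m" for m
    using that unfolding is_lub_def by blast
  moreover have "\<exists>w\<in>lists S. uleq S C [a] w \<and> uleq S C [b] w"
    if "is_lub (lists S) (uleq S C) [a] [b] m" for m
    using that unfolding is_lub_def by blast
  ultimately show ?thesis using is_lub_uleq_of_is_lub_cleq[OF assms] by blast
qed

end

text \<open>Input only: printing would loop, as every \<open>C\<close> is an eta-variant of \<open>opp (opp C)\<close>.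
  For the same reason the \<open>_opp\<close> equations below are only ever used instantiated.\<close>

abbreviation (input) opp :: "('a \<Rightarrow> 'a \<Rightarrow> 'a option) \<Rightarrow> 'a \<Rightarrow> 'a \<Rightarrow> 'a option" where
  "opp C \<equiv> \<lambda>x y. C y x"

lemma is_ident_opp: "is_ident S (opp C) = is_ident S C"
  unfolding is_ident_def by blast

lemma Ids_opp: "Ids S (opp C) = Ids S C"
  unfolding Ids_def is_ident_opp[of S C] by (rule refl)

lemma src_opp: "src S (opp C) = tgt S C"
  unfolding src_def tgt_def is_ident_opp[of S C] by (rule refl)

lemma tgt_opp: "tgt S (opp C) = src S C"
  unfolding src_def tgt_def is_ident_opp[of S C] by (rule refl)

lemma cleq_opp: "cleq S (opp C) = cleqL S C"
  unfolding cleq_def cleqL_def by (rule refl)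

lemma cleqL_opp: "cleqL S (opp C) = cleq S C"
  unfolding cleq_def cleqL_def by (rule refl)

lemma category_opp:
  assumes "category S C" shows "category S (opp C)"
proof -
  have assoc: "Option.bind (C x y) (\<lambda>u. C u z) = Option.bind (C y z) (\<lambda>v. C x v)"
    and composable: "C x y \<noteq> None \<Longrightarrow> C y z \<noteq> None \<Longrightarrow> Option.bind (C x y) (\<lambda>u. C u z) \<noteq> None"
    if "x \<in> S" "y \<in> S" "z \<in> S" for x y z
    using assms that unfolding category_def by blast+
  show ?thesis unfolding category_def is_ident_opp[of S C]
  proof (intro conjI ballI impI)
    fix x y z assume xyz: "x \<in> S" "y \<in> S" "z \<in> S"
    show "Option.bind (C y x) (\<lambda>u. C z u) = Option.bind (C z y) (\<lambda>v. C v x)"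
      using assoc[OF xyz(3,2,1)] by simp
    assume "C y x \<noteq> None" "C z y \<noteq> None"
    then show "Option.bind (C y x) (\<lambda>u. C z u) \<noteq> None"
      using assoc[OF xyz(3,2,1)] composable[OF xyz(3,2,1)] by simp
  qed (use assms in \<open>auto simp: category_def\<close>)
qed

lemma gcd_category_opp:
  assumes "gcd_category S C" shows "gcd_category S (opp C)"
proof -
  interpret gcd_cat S C using assms by unfold_locales
  show ?thesis
    unfolding gcd_category_def Ids_opp[of S C] src_opp[of S C] tgt_opp[of S C]
      cleq_opp[of S C] cleqL_opp[of S C]
  proof (intro conjI allI impI)
    show "category S (opp C)" using category_opp[OF category] .
  next
    fix x y assume "C y x \<noteq> None" "C y x \<in> Some ` Ids S C"
    then show "x \<in> Ids S C" using conical ident_mult_left by fastforce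
  next
    fix x y z assume "C y x \<noteq> None" "C y x = C z x"
    then show "y = z" using cancel_right by fastforce
  next
    fix x y z assume "C x y \<noteq> None" "C x y = C x z"
    then show "y = z" using cancel_left by fastforce
  qed (use left_gcd_exists right_gcd_exists in auto)
qed

lemma ueq_opp_imp_ueq_rev: "ueq S (opp C) u v \<Longrightarrow> ueq S C (rev u) (rev v)"
proof (induction rule: ueq.induct)
  case (ueq_ctxt u v p q)
  then show ?case using ueq.ueq_ctxt[OF ueq_ctxt.IH, of "rev q" "rev p"] by simp
next
  case (ueq_id e) then show ?case by (simp add: Ids_opp[of S C] ueq.ueq_id)
next
  case (ueq_mult x y z) then show ?case by (simp add: ueq.ueq_mult)
qed (auto intro: ueq.intros)

lemma ueq_opp_rev_iff: "ueq S (opp C) (rev u) (rev v) \<longleftrightarrow> ueq S C u v"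
  using ueq_opp_imp_ueq_rev[of S C "rev u" "rev v"] ueq_opp_imp_ueq_rev[of S "opp C" u v] by auto

lemma uleqL_iff_uleq_opp: "uleqL S C u v \<longleftrightarrow> uleq S (opp C) (rev u) (rev v)"
proof -
  have "uleqL S C u v \<longleftrightarrow> (\<exists>x\<in>lists S. ueq S (opp C) (rev u @ rev x) (rev v))"
    unfolding uleqL_def by (metis ueq_opp_rev_iff rev_append)
  also have "\<dots> \<longleftrightarrow> uleq S (opp C) (rev u) (rev v)"
    unfolding uleq_def by (metis rev_rev_ident set_rev in_lists_conv_set)
  finally show ?thesis .
qed

lemma is_lub_uleqL_iff_opp:
  "is_lub (lists S) (uleqL S C) u v m \<longleftrightarrow>
   is_lub (lists S) (uleq S (opp C)) (rev u) (rev v) (rev m)"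
  unfolding is_lub_def uleqL_iff_uleq_opp
  by (metis rev_rev_ident set_rev in_lists_conv_set)

lemma left_lcm_equivalences:
  assumes "gcd_category S C" "a \<in> S" "b \<in> S" "tgt S C a = tgt S C b"
  shows
      "((\<exists>m. is_lub (lists S) (uleqL S C) [a] [b] m)
         \<longleftrightarrow> (\<exists>w\<in>lists S. uleqL S C [a] w \<and> uleqL S C [b] w)) \<and>
      ((\<exists>w\<in>lists S. uleqL S C [a] w \<and> uleqL S C [b] w)
         \<longleftrightarrow> (\<exists>m. is_lub S (cleqL S C) a b m)) \<and>
      ((\<exists>m. is_lub S (cleqL S C) a b m)
         \<longleftrightarrow> (\<exists>w\<in>S. cleqL S C a w \<and> cleqL S C b w)) \<and>
      (\<forall>m. is_lub S (cleqL S C) a b m \<longrightarrow> is_lub (lists S) (uleqL S C) [a] [b] [m])"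
proof -
  interpret opp: gcd_cat S "opp C" using gcd_category_opp[OF assms(1)] by unfold_locales
  have "src S (opp C) a = src S (opp C) b" using assms(4) by (simp add: src_opp[of S C])
  note dual = opp.right_lcm_equivalences[OF assms(2,3) this, unfolded cleq_opp[of S C]]
  have lub: "is_lub (lists S) (uleqL S C) [a] [b] m \<longleftrightarrow>
      is_lub (lists S) (uleq S (opp C)) [a] [b] (rev m)" for m
    using is_lub_uleqL_iff_opp[of S C "[a]" "[b]" m] by simp
  have ex_lub: "(\<exists>m. is_lub (lists S) (uleqL S C) [a] [b] m) \<longleftrightarrow>
      (\<exists>m. is_lub (lists S) (uleq S (opp C)) [a] [b] m)"
    unfolding lub by (metis rev_rev_ident)
  have common: "(\<exists>w\<in>lists S. uleqL S C [a] w \<and> uleqL S C [b] w) \<longleftrightarrow>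
      (\<exists>w\<in>lists S. uleq S (opp C) [a] w \<and> uleq S (opp C) [b] w)"
    unfolding uleqL_iff_uleq_opp by (metis rev_singleton_conv rev_rev_ident set_rev in_lists_conv_set)
  have lub_singleton: "is_lub (lists S) (uleqL S C) [a] [b] [m] \<longleftrightarrow>
      is_lub (lists S) (uleq S (opp C)) [a] [b] [m]" for m
    using lub[of "[m]"] by simp
  show ?thesis
    unfolding ex_lub common lub_singleton using dual by simp
qed

theorem proposition5p10:
  fixes S :: "'a set" and C :: "'a \<Rightarrow> 'a \<Rightarrow> 'a option" and a b :: 'a
  assumes "gcd_category S C" and "a \<in> S" and "b \<in> S"
  shows
   "(src S C a = src S C b \<longrightarrow>
      ((\<exists>m. is_lub (lists S) (uleq S C) [a] [b] m)
         \<longleftrightarrow> (\<exists>w\<in>lists S. uleq S C [a] w \<and> uleq S C [b] w)) \<and>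
      ((\<exists>w\<in>lists S. uleq S C [a] w \<and> uleq S C [b] w)
         \<longleftrightarrow> (\<exists>m. is_lub S (cleq S C) a b m)) \<and>
      ((\<exists>m. is_lub S (cleq S C) a b m)
         \<longleftrightarrow> (\<exists>w\<in>S. cleq S C a w \<and> cleq S C b w)) \<and>
      (\<forall>m. is_lub S (cleq S C) a b m \<longrightarrow> is_lub (lists S) (uleq S C) [a] [b] [m])) \<and>
    (tgt S C a = tgt S C b \<longrightarrow>
      ((\<exists>m. is_lub (lists S) (uleqL S C) [a] [b] m)
         \<longleftrightarrow> (\<exists>w\<in>lists S. uleqL S C [a] w \<and> uleqL S C [b] w)) \<and>
      ((\<exists>w\<in>lists S. uleqL S C [a] w \<and> uleqL S C [b] w)
         \<longleftrightarrow> (\<exists>m. is_lub S (cleqL S C) a b m)) \<and>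
      ((\<exists>m. is_lub S (cleqL S C) a b m)
         \<longleftrightarrow> (\<exists>w\<in>S. cleqL S C a w \<and> cleqL S C b w)) \<and>
      (\<forall>m. is_lub S (cleqL S C) a b m \<longrightarrow> is_lub (lists S) (uleqL S C) [a] [b] [m]))"
proof -
  interpret gcd_cat S C using assms(1) by unfold_locales
  show ?thesis
    using right_lcm_equivalences[OF assms(2,3)] left_lcm_equivalences[OF assms] by blast
qed

end
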